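(* Let $u=u(t,x)$ be a smooth function on $[0,T)\times S^1$ and let $\eta$ be its flow, i.e. $\eta:[0,T)\times\mathbb{R}\to\mathbb{R}$ with $\eta(t,x+1)=\eta(t,x)+1$, $\partial_t\eta(t,x)=u(t,\eta(t,x))$, $\eta(0,x)=x$. Then $u$ is a solution of the $\mu$B equation $$u_{txx}+3u_xu_{xx}+uu_{xxx}=0$$ if and only if the horizontal component of the acceleration of $\eta$ vanishes, i.e. $$P_\eta\nabla_{\dot\eta}\dot\eta=\partial_t^2\eta(t,x)-\int_0^1\partial_t^2\eta(t,y)\,dy=0\quad\text{for all }t,x.$$ Moreover, if $u$ is such a solution with $u(0,\cdot)=u_0$, then $\eta(t,x)=x+t\big(u_0(x)-u_0(0)\big)+\eta(t,0)$ for all $x\in[0,1]$ and all sufficiently small $t\ge0$.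
   Context: $S^1=\mathbb{R}/\mathbb{Z}\simeq[0,1)$. On the group of circle diffeomorphisms equipped with the $L^2$ metric $\langle V,W\rangle=\int_0^1V(x)W(x)\,dx$ on each tangent space, the Levi-Civita covariant derivative along a curve $\eta(t)$ satisfies $\nabla_{\dot\eta}\dot\eta=\ddot\eta=\partial_t^2\eta$, and the horizontal projection for the Riemannian submersion onto the quotient by rotations is $P_\eta(W)=W-\int_0^1W(x)\,dx$. *)

theory Defs
  imports "HOL-Analysis.Analysis"
begin

text \<open>Functions on [0,T) x R are curried: f t x. Partial derivatives: in x (two-sided),
  in t taken within [0,T) (one-sided at t = 0).\<close>

definition dX :: "(real \<Rightarrow> real \<Rightarrow> real) \<Rightarrow> real \<Rightarrow> real \<Rightarrow> real" where
  "dX f = (\<lambda>t x. deriv (\<lambda>y. f t y) x)"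

definition dT :: "real \<Rightarrow> (real \<Rightarrow> real \<Rightarrow> real) \<Rightarrow> real \<Rightarrow> real \<Rightarrow> real" where
  "dT T f = (\<lambda>t x. vector_derivative (\<lambda>s. f s x) (at t within {0..<T}))"

text \<open>Iterated partial derivatives: True = d/dt, False = d/dx (applied right to left).\<close>
fun pd :: "real \<Rightarrow> bool list \<Rightarrow> (real \<Rightarrow> real \<Rightarrow> real) \<Rightarrow> real \<Rightarrow> real \<Rightarrow> real" where
  "pd T [] f = f"
| "pd T (True # w) f = dT T (pd T w f)"
| "pd T (False # w) f = dX (pd T w f)"

definition smooth_cyl :: "real \<Rightarrow> (real \<Rightarrow> real \<Rightarrow> real) \<Rightarrow> bool" where
  "smooth_cyl T f \<longleftrightarrow> (\<forall>w. continuous_on ({0..<T} \<times> UNIV) (\<lambda>(t, x). pd T w f t x) \<and>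
     (\<forall>t\<in>{0..<T}. \<forall>x. (\<lambda>s. pd T w f s x) differentiable (at t within {0..<T}) \<and>
                       (\<lambda>y. pd T w f t y) differentiable (at x)))"

definition muB_solution :: "real \<Rightarrow> (real \<Rightarrow> real \<Rightarrow> real) \<Rightarrow> bool" where
  "muB_solution T u \<longleftrightarrow> (\<forall>t\<in>{0..<T}. \<forall>x.
     dT T (dX (dX u)) t x + 3 * dX u t x * dX (dX u) t x + u t x * dX (dX (dX u)) t x = 0)"

end

theory Submission
  imports Defs "HOL-Library.Periodic_Fun"
begin

text \<open>
  Along the flow, d_t eta = u o eta, hence the acceleration of the flow is d_t^2 eta = F o eta for
  the material derivative F = u_t + u u_x, and (after exchanging time and space derivatives) the
  muB expression is exactly F_xx. A 1-periodic function has vanishing second derivative iff it is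
  constant, because its first derivative is then a constant with zero mean. Since eta(t,.) is
  continuous (a Gronwall estimate makes it Lipschitz) and commutes with translation by 1, it meets
  every residue class modulo 1; so F(t,.) is constant iff the acceleration d_t^2 eta(t,.) is
  constant, i.e. equal to its mean over [0,1]. Finally, if F(t,.) is constant then
  u(t, eta(t,x)) - u(t, eta(t,0)) has zero time derivative, so it keeps its initial value
  u_0(x) - u_0(0), and one more integration in time gives the formula for eta.
\<close>

lemma DERIV_mean_value_between:
  fixes g g' :: "real \<Rightarrow> real"
  assumes "\<And>y. (g has_real_derivative g' y) (at y)"
  shows "\<exists>z. \<bar>z - a\<bar> \<le> \<bar>b - a\<bar> \<and> g b - g a = (b - a) * g' z"
proof (cases a b rule: linorder_cases)
  case less
  then obtain z where "a < z" "z < b" "g b - g a = (b - a) * g' z"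
    using MVT2[OF less, of g g'] assms by blast
  then show ?thesis by (intro exI[of _ z]) auto
next
  case greater
  then obtain z where "b < z" "z < a" "g a - g b = (a - b) * g' z"
    using MVT2[OF greater, of g g'] assms by blast
  then show ?thesis by (intro exI[of _ z]) (auto simp: algebra_simps)
qed simp

lemma DERIV_linearization_bound:
  fixes g g' :: "real \<Rightarrow> real"
  assumes "\<And>y. (g has_real_derivative g' y) (at y)"
    and "\<And>y. \<bar>y - a\<bar> \<le> \<bar>b - a\<bar> \<Longrightarrow> \<bar>g' y - c\<bar> \<le> e"
  shows "\<bar>g b - g a - c * (b - a)\<bar> \<le> e * \<bar>b - a\<bar>"
proof -
  obtain z where z: "\<bar>z - a\<bar> \<le> \<bar>b - a\<bar>" and "g b - g a = (b - a) * g' z"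
    using DERIV_mean_value_between[OF assms(1)] by blast
  then have "g b - g a - c * (b - a) = (g' z - c) * (b - a)"
    by (simp add: algebra_simps)
  then have "\<bar>g b - g a - c * (b - a)\<bar> = \<bar>g' z - c\<bar> * \<bar>b - a\<bar>"
    by (simp add: abs_mult)
  also have "\<dots> \<le> e * \<bar>b - a\<bar>"
    using assms(2)[OF z] by (simp add: mult_right_mono)
  finally show ?thesis .
qed

lemma DERIV_periodic:
  fixes f f' :: "real \<Rightarrow> real"
  assumes "\<And>y. f (y + 1) = f y" and "\<And>y. (f has_real_derivative f' y) (at y)"
  shows "f' (y + 1) = f' y"
proof -
  have "((\<lambda>x. f (x + 1)) has_real_derivative f' (y + 1)) (at y)"
    using assms(2)[of "y + 1"] DERIV_shift by blast
  then have "(f has_real_derivative f' (y + 1)) (at y)"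
    using assms(1) by simp
  then show ?thesis
    using assms(2) DERIV_unique by blast
qed

lemma periodic_second_deriv_zero_iff_constant:
  fixes f f' f'' :: "real \<Rightarrow> real"
  assumes per: "\<And>y. f (y + 1) = f y"
    and f': "\<And>y. (f has_real_derivative f' y) (at y)"
    and f'': "\<And>y. (f' has_real_derivative f'' y) (at y)"
  shows "(\<forall>y. f'' y = 0) \<longleftrightarrow> (\<exists>c. \<forall>y. f y = c)"
proof
  assume "\<forall>y. f'' y = 0"
  then obtain k where k: "\<And>y. f' y = k"
    using has_field_derivative_zero_constant[of UNIV f'] f'' by auto
  have "f 1 - f 0 = k"
    using DERIV_const_ratio_const[of 0 1 f k] f' k by simp
  then have "k = 0" using per[of 0] by simp
  then show "\<exists>c. \<forall>y. f y = c"
    using has_field_derivative_zero_constant[of UNIV f] f' k by auto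
next
  assume "\<exists>c. \<forall>y. f y = c"
  then have "f' y = 0" for y
    using f' DERIV_unique by (metis DERIV_const ext)
  then show "\<forall>y. f'' y = 0"
    using f'' DERIV_unique by (metis DERIV_const ext)
qed

lemma DERIV_zero_convex_eq:
  fixes f :: "real \<Rightarrow> real"
  assumes "convex S" and "\<And>s. s \<in> S \<Longrightarrow> (f has_real_derivative 0) (at s within S)"
    and "a \<in> S" and "b \<in> S"
  shows "f a = f b"
  using has_field_derivative_zero_constant[OF assms(1,2)] assms(3,4) by force

lemma periodic_continuous_bounded:
  fixes g :: "real \<Rightarrow> real \<Rightarrow> real"
  assumes K: "compact K"
    and cont: "continuous_on (K \<times> UNIV) (\<lambda>(s, y). g s y)"
    and per: "\<And>s y. s \<in> K \<Longrightarrow> g s (y + 1) = g s y"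
  shows "\<exists>B. \<forall>s\<in>K. \<forall>y. \<bar>g s y\<bar> \<le> B"
proof -
  define S where "S = (\<lambda>(s, y). g s y) ` (K \<times> {0..1})"
  have "compact S"
    unfolding S_def
    by (rule compact_continuous_image[OF continuous_on_subset[OF cont]])
      (auto intro: compact_Times K)
  then obtain B where B: "\<forall>z\<in>S. \<bar>z\<bar> \<le> B"
    using compact_imp_bounded bounded_real by metis
  have "\<bar>g s y\<bar> \<le> B" if s: "s \<in> K" for s y
  proof -
    interpret periodic_fun_simple' "g s" by unfold_locales (rule per[OF s])
    have "g s y = g s (frac y)"
      using plus_of_int[of "frac y" "\<lfloor>y\<rfloor>"] by (simp add: frac_def)
    moreover have "(s, frac y) \<in> K \<times> {0..1}"
      using s frac_lt_1[of y] by simp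
    ultimately show ?thesis
      using B unfolding S_def by force
  qed
  then show ?thesis by blast
qed

lemma pd_append: "pd T w (pd T w' f) = pd T (w @ w') f"
proof (induction w)
  case (Cons b w)
  then show ?case by (cases b) simp_all
qed simp

lemma smooth_cyl_pd: "smooth_cyl T v \<Longrightarrow> smooth_cyl T (pd T w v)"
  unfolding smooth_cyl_def by (simp add: pd_append)

lemma smooth_cyl_dX: "smooth_cyl T v \<Longrightarrow> smooth_cyl T (dX v)"
  using smooth_cyl_pd[of T v "[False]"] by simp

lemma smooth_cyl_dT: "smooth_cyl T v \<Longrightarrow> smooth_cyl T (dT T v)"
  using smooth_cyl_pd[of T v "[True]"] by simp

lemma smooth_cyl_continuous_on: "smooth_cyl T v \<Longrightarrow> continuous_on ({0..<T} \<times> UNIV) (\<lambda>(t, x). v t x)"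
  unfolding smooth_cyl_def by (metis pd.simps(1))

lemma smooth_cyl_has_dX:
  "smooth_cyl T v \<Longrightarrow> t \<in> {0..<T} \<Longrightarrow> ((\<lambda>y. v t y) has_real_derivative dX v t x) (at x)"
  unfolding smooth_cyl_def dX_def by (metis DERIV_deriv_iff_real_differentiable pd.simps(1))

lemma smooth_cyl_has_dT:
  "smooth_cyl T v \<Longrightarrow> t \<in> {0..<T} \<Longrightarrow>
    ((\<lambda>s. v s x) has_real_derivative dT T v t x) (at t within {0..<T})"
  unfolding smooth_cyl_def dT_def
  by (metis has_real_derivative_iff_has_vector_derivative vector_derivative_works pd.simps(1))

lemma smooth_cyl_continuous_on_time:
  assumes "smooth_cyl T v" and "A \<subseteq> {0..<T}"
  shows "continuous_on A (\<lambda>s. v s y)"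
  by (rule continuous_on_compose2[OF smooth_cyl_continuous_on[OF assms(1)], of A "\<lambda>s. (s, y)",
        simplified]) (use assms(2) in \<open>auto intro!: continuous_intros\<close>)

lemma smooth_cyl_continuous_on_swap:
  assumes "smooth_cyl T v" and "A \<subseteq> {0..<T}"
  shows "continuous_on (UNIV \<times> A) (\<lambda>(y, s). v s y)"
proof -
  have "continuous_on (UNIV \<times> A) (\<lambda>z. (\<lambda>(s, y). v s y) (snd z, fst z))"
    by (rule continuous_on_compose2[OF smooth_cyl_continuous_on[OF assms(1)]])
      (use assms(2) in \<open>auto intro!: continuous_intros\<close>)
  then show ?thesis by (simp add: case_prod_beta')
qed

lemma dX_eqI: "((\<lambda>y. f t y) has_real_derivative d) (at x) \<Longrightarrow> dX f t x = d"
  unfolding dX_def by (rule DERIV_imp_deriv)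

lemma dT_eqI:
  assumes "0 < T" and "t \<in> {0..<T}"
    and "((\<lambda>s. f s x) has_real_derivative d) (at t within {0..<T})"
  shows "dT T f t x = d"
proof -
  have "at t within {0..<T} \<noteq> bot"
    using assms(1,2) islimpt_Ico[of 0 T t] by (auto simp: trivial_limit_within)
  then show ?thesis
    unfolding dT_def using assms(3)
    by (simp add: vector_derivative_within has_real_derivative_iff_has_vector_derivative)
qed

lemma smooth_cyl_eq_integral_dT:
  assumes sm: "smooth_cyl T v" and s: "s \<in> {0..<T}"
  shows "v s y = v 0 y + integral {0..s} (\<lambda>r. dT T v r y)"
proof -
  have sub: "{0..s} \<subseteq> {0..<T}" using s by auto
  have "((\<lambda>r. dT T v r y) has_integral (v s y - v 0 y)) {0..s}"
  proof (rule fundamental_theorem_of_calculus)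
    fix r assume "r \<in> {0..s}"
    then have "r \<in> {0..<T}" using sub by auto
    then show "((\<lambda>r. v r y) has_vector_derivative dT T v r y) (at r within {0..s})"
      using has_field_derivative_subset[OF smooth_cyl_has_dT[OF sm] sub]
      by (simp add: has_real_derivative_iff_has_vector_derivative)
  qed (use s in simp)
  then show ?thesis by (simp add: integral_unique)
qed

lemma smooth_cyl_dX_eq_integral:
  assumes T: "0 < T" and sm: "smooth_cyl T v" and s: "s \<in> {0..<T}"
  shows "dX v s x = dX v 0 x + integral {0..s} (\<lambda>r. dX (dT T v) r x)"
proof (rule dX_eqI)
  have sub: "{0..s} \<subseteq> {0..<T}" using s by auto
  have "((\<lambda>y. integral (cbox 0 s) (\<lambda>r. dT T v r y)) has_real_derivative
      integral (cbox 0 s) (\<lambda>r. dX (dT T v) r x)) (at x within UNIV)"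
  proof (rule leibniz_rule_field_derivative)
    show "((\<lambda>y. dT T v r y) has_real_derivative dX (dT T v) r y) (at y within UNIV)"
      if "r \<in> cbox 0 s" for y r
      using smooth_cyl_has_dX[OF smooth_cyl_dT[OF sm]] sub that by auto
    show "(\<lambda>r. dT T v r y) integrable_on cbox 0 s" for y
      using integrable_continuous_real[OF smooth_cyl_continuous_on_time[OF smooth_cyl_dT[OF sm] sub]]
      by simp
    show "continuous_on (UNIV \<times> cbox 0 s) (\<lambda>(y, r). dX (dT T v) r y)"
      using smooth_cyl_continuous_on_swap[OF smooth_cyl_dX[OF smooth_cyl_dT[OF sm]] sub] by simp
  qed auto
  then have "((\<lambda>y. v 0 y + integral {0..s} (\<lambda>r. dT T v r y)) has_real_derivative
      dX v 0 x + integral {0..s} (\<lambda>r. dX (dT T v) r x)) (at x)"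
    using smooth_cyl_has_dX[OF sm, of 0] T by (auto intro!: derivative_intros)
  then show "((\<lambda>y. v s y) has_real_derivative dX v 0 x + integral {0..s} (\<lambda>r. dX (dT T v) r x)) (at x)"
    by (simp add: smooth_cyl_eq_integral_dT[OF sm s])
qed

lemma dT_dX_commute:
  assumes T: "0 < T" and sm: "smooth_cyl T v" and t: "t \<in> {0..<T}"
  shows "dT T (dX v) t x = dX (dT T v) t x"
proof (rule dT_eqI[OF T t])
  \<comment> \<open>The fundamental theorem is applied on the closed interval {0..b}, which is a neighbourhood
    of t within {0..<T}.\<close>
  define b where "b = (t + T) / 2"
  have b: "t < b" "b < T" and sub: "{0..b} \<subseteq> {0..<T}"
    using t by (auto simp: b_def)
  have tb: "t \<in> {0..b}" using b t by simp
  have I: "((\<lambda>s. integral {0..s} (\<lambda>r. dX (dT T v) r x)) has_real_derivative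
      dX (dT T v) t x) (at t within {0..b})"
    by (rule integral_has_real_derivative[OF smooth_cyl_continuous_on_time[OF
        smooth_cyl_dX[OF smooth_cyl_dT[OF sm]] sub] tb])
  have "((\<lambda>s. dX v 0 x + integral {0..s} (\<lambda>r. dX (dT T v) r x)) has_real_derivative
      dX (dT T v) t x) (at t within {0..b})"
    using DERIV_add[OF DERIV_const I, of "dX v 0 x"] by (simp only: add_0_left)
  then have "((\<lambda>s. dX v s x) has_real_derivative dX (dT T v) t x) (at t within {0..b})"
  proof (rule has_field_derivative_transform_within[where d=1, OF _ _ tb])
    show "dX v 0 x + integral {0..s} (\<lambda>r. dX (dT T v) r x) = dX v s x" if "s \<in> {0..b}" for s
      by (rule smooth_cyl_dX_eq_integral[OF T sm, symmetric]) (use that sub in auto)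
  qed simp
  moreover have "at t within {0..b} = at t within {0..<T}"
    by (rule at_within_nhd[of t "{..<b}"]) (use b in auto)
  ultimately show "((\<lambda>s. dX v s x) has_real_derivative dX (dT T v) t x) (at t within {0..<T})"
    by simp
qed

lemma slope_tendsto_partial_deriv:
  fixes u ux :: "real \<Rightarrow> real \<Rightarrow> real" and p :: "real \<Rightarrow> real"
  assumes ux: "\<And>s y. s \<in> D \<Longrightarrow> ((\<lambda>y. u s y) has_real_derivative ux s y) (at y)"
    and cont: "continuous_on (D \<times> UNIV) (\<lambda>(s, y). ux s y)"
    and p: "continuous (at t within D) p" and t: "t \<in> D"
  shows "((\<lambda>s. if p s = p t then ux t (p t) else (u s (p s) - u s (p t)) / (p s - p t))
           \<longlongrightarrow> ux t (p t)) (at t within D)"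
proof (rule tendstoI)
  fix e :: real assume e: "0 < e"
  obtain d where d: "d > 0" and near: "\<And>z. z \<in> D \<times> UNIV \<Longrightarrow> dist z (t, p t) < d \<Longrightarrow>
      dist ((\<lambda>(s, y). ux s y) z) (ux t (p t)) < e / 2"
    using continuous_on_iff[THEN iffD1, OF cont, rule_format, of "(t, p t)" "e / 2"] e t by auto
  have "eventually (\<lambda>s. dist (p s) (p t) < d / 2) (at t within D)"
    using tendstoD[OF p[unfolded continuous_within], of "d / 2"] d by simp
  moreover have "eventually (\<lambda>s. s \<in> D \<and> dist s t < d / 2) (at t within D)"
    unfolding eventually_at using d by (intro exI[of _ "d / 2"]) auto
  ultimately show "eventually (\<lambda>s. dist (if p s = p t then ux t (p t)
      else (u s (p s) - u s (p t)) / (p s - p t)) (ux t (p t)) < e) (at t within D)"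
  proof eventually_elim
    case (elim s)
    show ?case
    proof (cases "p s = p t")
      case False
      define A where "A = u s (p s) - u s (p t) - ux t (p t) * (p s - p t)"
      have "\<bar>A\<bar> \<le> e / 2 * \<bar>p s - p t\<bar>"
        unfolding A_def
      proof (rule DERIV_linearization_bound)
        show "((\<lambda>y. u s y) has_real_derivative ux s y) (at y)" for y
          using ux elim by auto
        fix y assume y: "\<bar>y - p t\<bar> \<le> \<bar>p s - p t\<bar>"
        have "dist (s, y) (t, p t) \<le> dist s t + dist y (p t)"
          unfolding dist_Pair_Pair by (rule sqrt_sum_squares_le_sum_abs[THEN order_trans]) auto
        also have "\<dots> < d"
          using elim y by (simp add: dist_real_def)
        finally show "\<bar>ux s y - ux t (p t)\<bar> \<le> e / 2"
          using near[of "(s, y)"] elim by (force simp: dist_real_def)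
      qed
      then have bound: "\<bar>A\<bar> / \<bar>p s - p t\<bar> \<le> e / 2"
        using False by (simp add: pos_divide_le_eq)
      have "(u s (p s) - u s (p t)) / (p s - p t) - ux t (p t) = A / (p s - p t)"
        using False by (simp add: A_def field_simps)
      then have "dist ((u s (p s) - u s (p t)) / (p s - p t)) (ux t (p t)) = \<bar>A\<bar> / \<bar>p s - p t\<bar>"
        by (simp add: dist_real_def abs_divide)
      then have "dist ((u s (p s) - u s (p t)) / (p s - p t)) (ux t (p t)) < e"
        using bound e by linarith
      with False show ?thesis by simp
    qed (use e in simp)
  qed
qed

text \<open>
  A chain rule for s \<mapsto> u s (p s) that needs only partial derivatives (u_t at the point and a
  jointly continuous u_x), which is what smooth_cyl provides; the library chain rules would need
  a Frechet derivative of (s, y) \<mapsto> u s y.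
\<close>

lemma has_real_derivative_along_curve:
  fixes u ux :: "real \<Rightarrow> real \<Rightarrow> real" and p :: "real \<Rightarrow> real"
  assumes ut: "((\<lambda>s. u s (p t)) has_real_derivative ut) (at t within D)"
    and ux: "\<And>s y. s \<in> D \<Longrightarrow> ((\<lambda>y. u s y) has_real_derivative ux s y) (at y)"
    and cont: "continuous_on (D \<times> UNIV) (\<lambda>(s, y). ux s y)"
    and p: "(p has_real_derivative v) (at t within D)" and t: "t \<in> D"
  shows "((\<lambda>s. u s (p s)) has_real_derivative ut + ux t (p t) * v) (at t within D)"
proof -
  define Q where "Q s = (if p s = p t then ux t (p t) else (u s (p s) - u s (p t)) / (p s - p t))"
    for s
  have split: "(u s (p s) - u t (p t)) / (s - t) =
      Q s * ((p s - p t) / (s - t)) + (u s (p t) - u t (p t)) / (s - t)" for s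
  proof -
    have "Q s * ((p s - p t) / (s - t)) = (u s (p s) - u s (p t)) / (s - t)"
      by (cases "p s = p t") (simp_all add: Q_def)
    then show ?thesis by (simp add: diff_divide_distrib)
  qed
  have "(Q \<longlongrightarrow> ux t (p t)) (at t within D)"
    unfolding Q_def by (rule slope_tendsto_partial_deriv[OF ux cont DERIV_continuous[OF p] t])
  moreover have "((\<lambda>s. (p s - p t) / (s - t)) \<longlongrightarrow> v) (at t within D)"
    using p by (simp add: has_field_derivative_iff)
  moreover have "((\<lambda>s. (u s (p t) - u t (p t)) / (s - t)) \<longlongrightarrow> ut) (at t within D)"
    using ut by (simp add: has_field_derivative_iff)
  ultimately have "((\<lambda>s. Q s * ((p s - p t) / (s - t)) + (u s (p t) - u t (p t)) / (s - t))
      \<longlongrightarrow> ux t (p t) * v + ut) (at t within D)"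
    by (intro tendsto_intros)
  then show ?thesis
    unfolding has_field_derivative_iff split by (simp add: add.commute)
qed

lemma flow_gronwall_decay:
  fixes u \<eta> :: "real \<Rightarrow> real \<Rightarrow> real"
  assumes t: "t \<in> {0..<T}"
    and lip: "\<And>s a b. s \<in> {0..t} \<Longrightarrow> \<bar>u s a - u s b\<bar> \<le> L * \<bar>a - b\<bar>"
    and flow: "\<And>s x. s \<in> {0..<T} \<Longrightarrow>
      ((\<lambda>s. \<eta> s x) has_real_derivative u s (\<eta> s x)) (at s within {0..<T})"
    and init: "\<And>x. \<eta> 0 x = x"
  shows "(\<eta> t x - \<eta> t x')\<^sup>2 * exp (- 2 * L * t) \<le> (x - x')\<^sup>2"
proof -
  define d where "d s = \<eta> s x - \<eta> s x'" for s
  define e where "e s = u s (\<eta> s x) - u s (\<eta> s x')" for s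
  define g where "g s = (d s)\<^sup>2 * exp (- 2 * L * s)" for s
  define g' where "g' s = 2 * exp (- 2 * L * s) * (d s * e s - L * (d s)\<^sup>2)" for s
  have dg: "(g has_real_derivative g' s) (at s within {0..<T})" if s: "s \<in> {0..<T}" for s
  proof -
    have dd: "(d has_real_derivative e s) (at s within {0..<T})"
      using DERIV_diff[OF flow[OF s, of x] flow[OF s, of x']] unfolding d_def e_def .
    have "(g has_real_derivative 2 * d s * e s * exp (- 2 * L * s)
        + (d s)\<^sup>2 * (exp (- 2 * L * s) * (- 2 * L))) (at s within {0..<T})"
      unfolding g_def by (rule derivative_eq_intros dd refl | simp)+
    then show ?thesis
      by (simp add: g'_def algebra_simps)
  qed
  have g'_nonpos: "g' s \<le> 0" if "s \<in> {0..t}" for s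
  proof -
    have "\<bar>e s\<bar> \<le> L * \<bar>d s\<bar>"
      unfolding d_def e_def by (rule lip[OF that])
    then have "d s * e s \<le> \<bar>d s\<bar> * (L * \<bar>d s\<bar>)"
      by (metis abs_ge_self abs_mult abs_ge_zero mult_left_mono order_trans)
    also have "\<dots> = L * (d s)\<^sup>2" by (simp add: power2_eq_square)
    finally have "d s * e s - L * (d s)\<^sup>2 \<le> 0" by simp
    then show ?thesis unfolding g'_def by (rule mult_nonneg_nonpos[rotated]) simp
  qed
  have "g t \<le> g 0"
  proof (rule DERIV_nonpos_imp_decreasing_open[of 0 t g])
    have "continuous_on {0..<T} g"
      unfolding continuous_on_eq_continuous_within using dg DERIV_continuous by blast
    then show "continuous_on {0..t} g"
      by (rule continuous_on_subset) (use t in auto)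
    fix s assume s: "0 < s" "s < t"
    then have "at s within {0..<T} = at s"
      using t by (intro at_within_interior) auto
    then show "\<exists>y. (g has_real_derivative y) (at s) \<and> y \<le> 0"
      using dg[of s] g'_nonpos[of s] s t by auto
  qed (use t in simp)
  then show ?thesis
    by (simp add: g_def d_def init)
qed

lemma flow_lipschitz_estimate:
  fixes u \<eta> :: "real \<Rightarrow> real \<Rightarrow> real"
  assumes t: "t \<in> {0..<T}"
    and lip: "\<And>s a b. s \<in> {0..t} \<Longrightarrow> \<bar>u s a - u s b\<bar> \<le> L * \<bar>a - b\<bar>"
    and flow: "\<And>s x. s \<in> {0..<T} \<Longrightarrow>
      ((\<lambda>s. \<eta> s x) has_real_derivative u s (\<eta> s x)) (at s within {0..<T})"
    and init: "\<And>x. \<eta> 0 x = x"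
  shows "\<bar>\<eta> t x - \<eta> t x'\<bar> \<le> exp (L * t) * \<bar>x - x'\<bar>"
proof -
  define d where "d = \<eta> t x - \<eta> t x'"
  have decay: "d\<^sup>2 * exp (- 2 * L * t) \<le> (x - x')\<^sup>2"
    unfolding d_def using t lip flow init by (rule flow_gronwall_decay)
  have "d\<^sup>2 = d\<^sup>2 * exp (- 2 * L * t) * exp (2 * L * t)"
    by (simp add: mult.assoc flip: exp_add)
  also have "\<dots> \<le> (x - x')\<^sup>2 * exp (2 * L * t)"
    using decay by (rule mult_right_mono) simp
  also have "exp (2 * L * t) = exp (L * t) * exp (L * t)"
    by (simp flip: exp_add)
  also have "(x - x')\<^sup>2 * (exp (L * t) * exp (L * t)) = (exp (L * t) * \<bar>x - x'\<bar>)\<^sup>2"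
    by (simp add: power_mult_distrib power2_eq_square)
  finally have "\<bar>d\<bar>\<^sup>2 \<le> (exp (L * t) * \<bar>x - x'\<bar>)\<^sup>2"
    by simp
  then show ?thesis
    unfolding d_def by (rule power2_le_imp_le) simp
qed

definition material_deriv :: "real \<Rightarrow> (real \<Rightarrow> real \<Rightarrow> real) \<Rightarrow> real \<Rightarrow> real \<Rightarrow> real" where
  "material_deriv T u t y = dT T u t y + u t y * dX u t y"

lemma dT_dX_dX_commute:
  assumes T: "0 < T" and sm: "smooth_cyl T u" and t: "t \<in> {0..<T}"
  shows "dT T (dX (dX u)) t y = dX (dX (dT T u)) t y"
proof -
  have "(\<lambda>z. dT T (dX u) t z) = (\<lambda>z. dX (dT T u) t z)"
    using dT_dX_commute[OF T sm t] by simp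
  then have "dX (dT T (dX u)) t y = dX (dX (dT T u)) t y"
    by (simp add: dX_def)
  then show ?thesis
    using dT_dX_commute[OF T smooth_cyl_dX[OF sm] t] by simp
qed

lemma material_deriv_derivatives:
  assumes T: "0 < T" and sm: "smooth_cyl T u" and t: "t \<in> {0..<T}"
  shows material_deriv_has_dX:
      "((\<lambda>y. material_deriv T u t y) has_real_derivative dX (material_deriv T u) t y) (at y)"
    and material_deriv_dX_has_dX:
      "((\<lambda>y. dX (material_deriv T u) t y) has_real_derivative dX (dX (material_deriv T u)) t y) (at y)"
    and dX_dX_material_deriv: "dX (dX (material_deriv T u)) t y =
      dT T (dX (dX u)) t y + 3 * dX u t y * dX (dX u) t y + u t y * dX (dX (dX u)) t y"
proof -
  define Fx where "Fx y = dX (dT T u) t y + dX u t y * dX u t y + u t y * dX (dX u) t y" for y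
  define Fxx where "Fxx y = dX (dX (dT T u)) t y + 3 * dX u t y * dX (dX u) t y
      + u t y * dX (dX (dX u)) t y" for y
  note du = smooth_cyl_has_dX[OF sm t] and dux = smooth_cyl_has_dX[OF smooth_cyl_dX[OF sm] t]
    and duxx = smooth_cyl_has_dX[OF smooth_cyl_dX[OF smooth_cyl_dX[OF sm]] t]
    and dut = smooth_cyl_has_dX[OF smooth_cyl_dT[OF sm] t]
    and dutx = smooth_cyl_has_dX[OF smooth_cyl_dX[OF smooth_cyl_dT[OF sm]] t]
  have hF: "((\<lambda>y. material_deriv T u t y) has_real_derivative Fx y) (at y)" for y
    unfolding material_deriv_def Fx_def
    by (rule derivative_eq_intros du dux dut refl)+ (simp add: algebra_simps)
  have hFx: "(Fx has_real_derivative Fxx y) (at y)" for y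
    unfolding Fx_def Fxx_def
    by (rule derivative_eq_intros du dux duxx dutx refl)+ (simp add: algebra_simps)
  have dXF: "dX (material_deriv T u) t y = Fx y" for y
    by (rule dX_eqI[of "material_deriv T u" t, OF hF])
  have dXXF: "dX (dX (material_deriv T u)) t y = Fxx y"
    by (rule dX_eqI) (unfold dXF, rule hFx)
  show "((\<lambda>y. material_deriv T u t y) has_real_derivative dX (material_deriv T u) t y) (at y)"
    unfolding dXF by (rule hF)
  show "((\<lambda>y. dX (material_deriv T u) t y) has_real_derivative dX (dX (material_deriv T u)) t y) (at y)"
    unfolding dXF dXXF by (rule hFx)
  show "dX (dX (material_deriv T u)) t y =
      dT T (dX (dX u)) t y + 3 * dX u t y * dX (dX u) t y + u t y * dX (dX (dX u)) t y"
    unfolding dXXF Fxx_def dT_dX_dX_commute[OF T sm t] ..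
qed

lemma muB_solution_iff_material_deriv_dX_dX:
  assumes "0 < T" and "smooth_cyl T u"
  shows "muB_solution T u \<longleftrightarrow> (\<forall>t\<in>{0..<T}. \<forall>y. dX (dX (material_deriv T u)) t y = 0)"
  unfolding muB_solution_def using dX_dX_material_deriv[OF assms] by simp

lemma material_deriv_periodic:
  assumes sm: "smooth_cyl T u" and per: "\<And>t x. t \<in> {0..<T} \<Longrightarrow> u t (x + 1) = u t x"
    and t: "t \<in> {0..<T}"
  shows "material_deriv T u t (y + 1) = material_deriv T u t y"
proof -
  have "dX u t (y + 1) = dX u t y"
    using DERIV_periodic[of "u t", OF per[OF t] smooth_cyl_has_dX[OF sm t]] .
  moreover have "dT T u t (y + 1) = dT T u t y"
    unfolding dT_def by (rule vector_derivative_cong_eq) (use per t in \<open>auto intro: always_eventually\<close>)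
  ultimately show ?thesis
    using per[OF t] by (simp add: material_deriv_def)
qed

lemma muB_solution_iff_material_deriv_constant:
  assumes T: "0 < T" and sm: "smooth_cyl T u"
    and per: "\<And>t x. t \<in> {0..<T} \<Longrightarrow> u t (x + 1) = u t x"
  shows "muB_solution T u \<longleftrightarrow> (\<forall>t\<in>{0..<T}. \<exists>c. \<forall>y. material_deriv T u t y = c)"
  unfolding muB_solution_iff_material_deriv_dX_dX[OF T sm]
proof (rule ball_cong[OF refl])
  fix t assume t: "t \<in> {0..<T}"
  show "(\<forall>y. dX (dX (material_deriv T u)) t y = 0) \<longleftrightarrow> (\<exists>c. \<forall>y. material_deriv T u t y = c)"
    by (rule periodic_second_deriv_zero_iff_constant[OF material_deriv_periodic[OF sm per t]
          material_deriv_has_dX[OF T sm t] material_deriv_dX_has_dX[OF T sm t]])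
qed

locale circle_flow =
  fixes T :: real and u \<eta> :: "real \<Rightarrow> real \<Rightarrow> real"
  assumes T_pos: "0 < T"
    and smooth: "smooth_cyl T u"
    and u_periodic: "\<And>t x. t \<in> {0..<T} \<Longrightarrow> u t (x + 1) = u t x"
    and flow_periodic: "\<And>t x. t \<in> {0..<T} \<Longrightarrow> \<eta> t (x + 1) = \<eta> t x + 1"
    and flow: "\<And>t x. t \<in> {0..<T} \<Longrightarrow>
      ((\<lambda>s. \<eta> s x) has_real_derivative u t (\<eta> t x)) (at t within {0..<T})"
    and flow_init: "\<And>x. \<eta> 0 x = x"
begin

lemma velocity_along_flow_has_derivative:
  assumes t: "t \<in> {0..<T}"
  shows "((\<lambda>s. u s (\<eta> s x)) has_real_derivative material_deriv T u t (\<eta> t x)) (at t within {0..<T})"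
proof -
  have "((\<lambda>s. u s (\<eta> s x)) has_real_derivative dT T u t (\<eta> t x) + dX u t (\<eta> t x) * u t (\<eta> t x))
      (at t within {0..<T})"
    by (rule has_real_derivative_along_curve[OF smooth_cyl_has_dT[OF smooth t]
          smooth_cyl_has_dX[OF smooth] smooth_cyl_continuous_on[OF smooth_cyl_dX[OF smooth]]
          flow[OF t] t])
  then show ?thesis
    by (simp add: material_deriv_def mult.commute)
qed

lemma dT_flow: "t \<in> {0..<T} \<Longrightarrow> dT T \<eta> t x = u t (\<eta> t x)"
  by (rule dT_eqI[OF T_pos _ flow])

lemma dT_dT_flow:
  assumes t: "t \<in> {0..<T}"
  shows "dT T (dT T \<eta>) t x = material_deriv T u t (\<eta> t x)"
proof (rule dT_eqI[OF T_pos t])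
  show "((\<lambda>s. dT T \<eta> s x) has_real_derivative material_deriv T u t (\<eta> t x)) (at t within {0..<T})"
    by (rule has_field_derivative_transform_within[OF velocity_along_flow_has_derivative[OF t]
          zero_less_one t]) (simp add: dT_flow)
qed

lemma flow_continuous:
  assumes t: "t \<in> {0..<T}"
  shows "continuous_on UNIV (\<eta> t)"
proof -
  have sub: "{0..t} \<subseteq> {0..<T}" using t by auto
  have cont: "continuous_on ({0..t} \<times> UNIV) (\<lambda>(s, y). dX u s y)"
    by (rule continuous_on_subset[OF smooth_cyl_continuous_on[OF smooth_cyl_dX[OF smooth]]])
      (use sub in auto)
  have per: "dX u s (y + 1) = dX u s y" if "s \<in> {0..t}" for s y
    using that sub DERIV_periodic[OF u_periodic smooth_cyl_has_dX[OF smooth]] by blast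
  obtain B where B: "\<forall>s\<in>{0..t}. \<forall>y. \<bar>dX u s y\<bar> \<le> B"
    using periodic_continuous_bounded[OF compact_Icc cont per] by blast
  have lip: "\<bar>u s a - u s b\<bar> \<le> B * \<bar>a - b\<bar>" if s: "s \<in> {0..t}" for s a b
  proof -
    have "\<bar>u s a - u s b - 0 * (a - b)\<bar> \<le> B * \<bar>a - b\<bar>"
    proof (rule DERIV_linearization_bound)
      show "(u s has_real_derivative dX u s y) (at y)" for y
        using smooth_cyl_has_dX[OF smooth] s sub by blast
      show "\<bar>dX u s y - 0\<bar> \<le> B" for y
        using B s by simp
    qed
    then show ?thesis by simp
  qed
  have "\<bar>\<eta> t x - \<eta> t x'\<bar> \<le> exp (B * t) * \<bar>x - x'\<bar>" for x x'
    by (rule flow_lipschitz_estimate[OF t lip flow flow_init])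
  then show ?thesis
    by (intro lipschitz_on_continuous_on[OF lipschitz_onI[of _ _ "exp (B * t)"]])
      (simp_all add: dist_real_def)
qed

lemma flow_covers_mod_1:
  assumes t: "t \<in> {0..<T}"
  shows "\<exists>x k. \<eta> t x = y + of_int k"
proof -
  define k where "k = - \<lfloor>y - \<eta> t 0\<rfloor>"
  have "\<eta> t 1 = \<eta> t 0 + 1"
    using flow_periodic[OF t, of 0] by simp
  then have lo: "\<eta> t 0 \<le> y + of_int k" and hi: "y + of_int k \<le> \<eta> t 1"
    unfolding k_def by linarith+
  obtain x where "\<eta> t x = y + of_int k"
    using IVT'[OF lo hi _ continuous_on_subset[OF flow_continuous[OF t]]] by auto
  then show ?thesis by blast
qed

lemma material_deriv_constant_iff_horizontal_acceleration_zero: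
  assumes t: "t \<in> {0..<T}"
  shows "(\<exists>c. \<forall>y. material_deriv T u t y = c) \<longleftrightarrow>
    (\<forall>x. dT T (dT T \<eta>) t x - integral {0..1} (\<lambda>y. dT T (dT T \<eta>) t y) = 0)"
proof
  assume "\<exists>c. \<forall>y. material_deriv T u t y = c"
  then show "\<forall>x. dT T (dT T \<eta>) t x - integral {0..1} (\<lambda>y. dT T (dT T \<eta>) t y) = 0"
    by (auto simp: dT_dT_flow[OF t])
next
  assume horizontal: "\<forall>x. dT T (dT T \<eta>) t x - integral {0..1} (\<lambda>y. dT T (dT T \<eta>) t y) = 0"
  interpret periodic_fun_simple' "material_deriv T u t"
    by unfold_locales (rule material_deriv_periodic[OF smooth u_periodic t])
  have "material_deriv T u t y = integral {0..1} (\<lambda>y. dT T (dT T \<eta>) t y)" for y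
  proof -
    obtain x k where "\<eta> t x = y + of_int k"
      using flow_covers_mod_1[OF t] by blast
    then have "material_deriv T u t y = dT T (dT T \<eta>) t x"
      by (simp add: dT_dT_flow[OF t] plus_of_int)
    then show ?thesis
      using horizontal by simp
  qed
  then show "\<exists>c. \<forall>y. material_deriv T u t y = c" by blast
qed

lemma muB_solution_iff_horizontal_acceleration_zero:
  "muB_solution T u \<longleftrightarrow>
    (\<forall>t\<in>{0..<T}. \<forall>x. dT T (dT T \<eta>) t x - integral {0..1} (\<lambda>y. dT T (dT T \<eta>) t y) = 0)"
  by (rule trans[OF muB_solution_iff_material_deriv_constant[OF T_pos smooth u_periodic]
        ball_cong[OF refl material_deriv_constant_iff_horizontal_acceleration_zero]])

lemma flow_displacement:
  assumes muB: "muB_solution T u" and t: "t \<in> {0..<T}"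
  shows "\<eta> t x = x + t * (u 0 x - u 0 0) + \<eta> t 0"
proof -
  have "convex {0..<T}" and "0 \<in> {0..<T}"
    using T_pos by (simp_all add: convex_real_interval)
  note eq_at_0 = DERIV_zero_convex_eq[OF this(1) _ _ this(2)]
  have relative_accel: "((\<lambda>s. u s (\<eta> s x) - u s (\<eta> s 0)) has_real_derivative 0)
      (at s within {0..<T})" if s: "s \<in> {0..<T}" for s
  proof -
    obtain c where c: "\<And>y. material_deriv T u s y = c"
      using muB s muB_solution_iff_material_deriv_constant[OF T_pos smooth u_periodic] by blast
    have "((\<lambda>s. u s (\<eta> s x) - u s (\<eta> s 0)) has_real_derivative
        material_deriv T u s (\<eta> s x) - material_deriv T u s (\<eta> s 0)) (at s within {0..<T})"
      by (intro DERIV_diff velocity_along_flow_has_derivative s)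
    then show ?thesis
      by (simp only: c diff_self)
  qed
  have relative_velocity: "u s (\<eta> s x) - u s (\<eta> s 0) = u 0 x - u 0 0"
    if "s \<in> {0..<T}" for s
    using eq_at_0[OF relative_accel that] by (simp add: flow_init)
  have "((\<lambda>s. \<eta> s x - \<eta> s 0 - s * (u 0 x - u 0 0)) has_real_derivative 0) (at s within {0..<T})"
    if s: "s \<in> {0..<T}" for s
  proof -
    have "((\<lambda>s. \<eta> s x - \<eta> s 0 - s * (u 0 x - u 0 0)) has_real_derivative
        u s (\<eta> s x) - u s (\<eta> s 0) - 1 * (u 0 x - u 0 0)) (at s within {0..<T})"
      by (rule DERIV_diff[OF DERIV_diff[OF flow[OF s] flow[OF s]] DERIV_cmult_right[OF DERIV_ident]])
    then show ?thesis
      by (simp only: relative_velocity[OF s] mult_1 diff_self)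
  qed
  from eq_at_0[OF this t] show ?thesis
    by (simp add: flow_init)
qed

end

theorem theorem7p1:
  fixes T :: real and u \<eta> :: "real \<Rightarrow> real \<Rightarrow> real"
  assumes "0 < T"
    and "smooth_cyl T u"
    and "\<And>t x. t \<in> {0..<T} \<Longrightarrow> u t (x + 1) = u t x"
    and "\<And>t x. t \<in> {0..<T} \<Longrightarrow> \<eta> t (x + 1) = \<eta> t x + 1"
    and "\<And>t x. t \<in> {0..<T} \<Longrightarrow>
           ((\<lambda>s. \<eta> s x) has_real_derivative u t (\<eta> t x)) (at t within {0..<T})"
    and "\<And>x. \<eta> 0 x = x"
  shows "(muB_solution T u \<longleftrightarrow>
           (\<forall>t\<in>{0..<T}. \<forall>x. dT T (dT T \<eta>) t x - integral {0..1} (\<lambda>y. dT T (dT T \<eta>) t y) = 0))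
       \<and> (muB_solution T u \<longrightarrow>
           (\<exists>\<delta>>0. \<forall>t. 0 \<le> t \<and> t < \<delta> \<and> t < T \<longrightarrow>
              (\<forall>x\<in>{0..1}. \<eta> t x = x + t * (u 0 x - u 0 0) + \<eta> t 0)))"
proof -
  interpret circle_flow T u \<eta>
    by (rule circle_flow.intro) (fact assms)+
  show ?thesis
  proof (intro conjI impI)
    show "muB_solution T u \<longleftrightarrow>
      (\<forall>t\<in>{0..<T}. \<forall>x. dT T (dT T \<eta>) t x - integral {0..1} (\<lambda>y. dT T (dT T \<eta>) t y) = 0)"
      by (rule muB_solution_iff_horizontal_acceleration_zero)
    assume muB: "muB_solution T u"
    show "\<exists>\<delta>>0. \<forall>t. 0 \<le> t \<and> t < \<delta> \<and> t < T \<longrightarrow>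
        (\<forall>x\<in>{0..1}. \<eta> t x = x + t * (u 0 x - u 0 0) + \<eta> t 0)"
    proof (intro exI[of _ T] conjI allI impI ballI)
      fix t x assume "0 \<le> t \<and> t < T \<and> t < T"
      then show "\<eta> t x = x + t * (u 0 x - u 0 0) + \<eta> t 0"
        by (intro flow_displacement[OF muB]) simp
    qed fact
  qed
qed

end
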